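(* Fix an integer $b\ge2$, $\gamma\in(0,1)$, let $\phi$ be a real analytic $\mathbb{Z}$-periodic function satisfying condition (H), and assume $\alpha<\min\{1,\frac{\log b}{\log(1/\gamma)}\}$. Then for any $\mathbf{v},\mathbf{w}\in\Lambda^{\#}$ there exist $\mathbf{i}\neq\mathbf{j}\in\Sigma$ and $x_{\mathbf{v},\mathbf{w}}\in I_{\mathbf{v}}$ such that $S'(x_{\mathbf{v},\mathbf{w}},\mathbf{w}\mathbf{i})-S'(x_{\mathbf{v},\mathbf{w}},\mathbf{w}\mathbf{j})\neq0$.
   Context: $\Lambda=\{0,\dots,b-1\}$, $\Lambda^{\#}=\bigcup_{n\ge1}\Lambda^n$, $\Sigma=\Lambda^{\mathbb{Z}_+}$, $\nu$ uniform on $\Lambda$; $\mathbf{w}\mathbf{i}$ denotes concatenation. $S(x,\mathbf{j})=\sum_{n\ge1}\gamma^{n-1}\phi\big(\frac{x+j_1+j_2b+\cdots+j_nb^{n-1}}{b^n}\big)$, $S'$ its $x$-derivative. Condition (H): for all $\mathbf{i}\neq\mathbf{j}\in\Sigma$, $x\mapsto S(x,\mathbf{j})-S(x,\mathbf{i})$ is not identically zero. $\alpha$ is the constant such that for Lebesgue-a.e. $x$ the image $m_x$ of $\nu^{\mathbb{Z}_+}$ under $\mathbf{j}\mapsto S(x,\mathbf{j})$ is exact dimensional with dimension $\alpha$. For $\mathbf{v}=v_1\cdots v_n$, $I_{\mathbf{v}}=\big[\frac{v_1+v_2b+\cdots+v_nb^{n-1}}{b^n},\frac{1+v_1+v_2b+\cdots+v_nb^{n-1}}{b^n}\big)$.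 *)

theory Defs
  imports "HOL-Probability.Probability"
begin

text \<open>Digits: \<Lambda> = {0..<b}. Finite words are lists (first list element = v_1);
 infinite words are sequences nat => nat (index 0 = j_1).\<close>

definition words :: "nat \<Rightarrow> nat list set" where
  "words b = {v. v \<noteq> [] \<and> (\<forall>k\<in>set v. k < b)}"

definition seqs :: "nat \<Rightarrow> (nat \<Rightarrow> nat) set" where
  "seqs b = {j. \<forall>n. j n < b}"

definition concat_word :: "nat list \<Rightarrow> (nat \<Rightarrow> nat) \<Rightarrow> (nat \<Rightarrow> nat)" where
  "concat_word w i = (\<lambda>n. if n < length w then w ! n else i (n - length w))"

text \<open>S(x,j) = sum_{n>=1} gamma^(n-1) phi((x + j_1 + j_2 b + ... + j_n b^(n-1))/b^n),
 reindexed with n from 0.\<close>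
definition S_fun :: "nat \<Rightarrow> real \<Rightarrow> (real \<Rightarrow> real) \<Rightarrow> real \<Rightarrow> (nat \<Rightarrow> nat) \<Rightarrow> real" where
  "S_fun b \<gamma> \<phi> x j = (\<Sum>n. \<gamma> ^ n * \<phi> ((x + (\<Sum>k<Suc n. real (j k) * real b ^ k)) / real b ^ Suc n))"

definition S_deriv :: "nat \<Rightarrow> real \<Rightarrow> (real \<Rightarrow> real) \<Rightarrow> real \<Rightarrow> (nat \<Rightarrow> nat) \<Rightarrow> real" where
  "S_deriv b \<gamma> \<phi> x j = deriv (\<lambda>y. S_fun b \<gamma> \<phi> y j) x"

definition cyl_interval :: "nat \<Rightarrow> nat list \<Rightarrow> real set" where
  "cyl_interval b v =
     (let a = (\<Sum>k<length v. real (v ! k) * real b ^ k) in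
      {a / real b ^ length v ..< (1 + a) / real b ^ length v})"

definition real_analytic :: "(real \<Rightarrow> real) \<Rightarrow> bool" where
  "real_analytic f \<longleftrightarrow> (\<forall>x. \<exists>r>0. \<exists>c::nat \<Rightarrow> real.
      \<forall>y. \<bar>y - x\<bar> < r \<longrightarrow> (\<lambda>n. c n * (y - x) ^ n) sums f y)"

definition condH :: "nat \<Rightarrow> real \<Rightarrow> (real \<Rightarrow> real) \<Rightarrow> bool" where
  "condH b \<gamma> \<phi> \<longleftrightarrow> (\<forall>i\<in>seqs b. \<forall>j\<in>seqs b. i \<noteq> j \<longrightarrow>
      (\<exists>x. S_fun b \<gamma> \<phi> x j - S_fun b \<gamma> \<phi> x i \<noteq> 0))"

definition bernoulli_prod :: "nat \<Rightarrow> (nat \<Rightarrow> nat) measure" where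
  "bernoulli_prod b = PiM UNIV (\<lambda>_. uniform_count_measure {0..<b})"

definition m_x :: "nat \<Rightarrow> real \<Rightarrow> (real \<Rightarrow> real) \<Rightarrow> real \<Rightarrow> real measure" where
  "m_x b \<gamma> \<phi> x = distr (bernoulli_prod b) borel (\<lambda>j. S_fun b \<gamma> \<phi> x j)"

definition exact_dimensional :: "real measure \<Rightarrow> real \<Rightarrow> bool" where
  "exact_dimensional m d \<longleftrightarrow>
     (AE y in m. ((\<lambda>r. ln (measure m (ball y r)) / ln r) \<longlongrightarrow> d) (at_right 0))"

end

theory Submission
  imports Defs
begin

text \<open>Differentiating term by term gives
  \<open>S'(x, a k) = \<phi>'((x + a) / b) / b + (\<gamma> / b) S'((x + a) / b, k)\<close>, so
  \<open>S'(x, w i) - S'(x, w j)\<close> is a nonzero multiple of \<open>S'(y, i) - S'(y, j)\<close> for some point \<open>y\<close>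
  independent of \<open>i, j\<close>. If the claim failed, \<open>S'(y, \<cdot>)\<close> would therefore be constant on \<open>\<Sigma>\<close>.
  Translating \<open>x\<close> by 1 acts on \<open>\<Sigma>\<close> as the \<open>b\<close>-adic odometer, a bijection, and
  \<open>x \<mapsto> (x + a) / b\<close> prepends a digit; so this constancy spreads to the dense set of points
  \<open>(y + m) / b\<^sup>r\<close> and, by continuity of \<open>S'\<close>, to every \<open>x\<close>. Then \<open>S(\<cdot>, 10000\<dots>) - S(\<cdot>, 0000\<dots>)\<close>
  is a constant \<open>c\<close> with \<open>S(x + 1, 0000\<dots>) = S(x, 0000\<dots>) + c\<close>; boundedness of \<open>S\<close> forces
  \<open>c = 0\<close>, contradicting (H).\<close>

lemma real_analytic_imp_C1:
  fixes f :: "real \<Rightarrow> real"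
  assumes "real_analytic f"
  shows "(f has_real_derivative deriv f x) (at x)" and "isCont (deriv f) x"
proof -
  obtain r c where r: "r > 0" and c: "\<And>y. \<bar>y - x\<bar> < r \<Longrightarrow> (\<lambda>n. c n * (y - x) ^ n) sums f y"
    using assms unfolding real_analytic_def by blast
  define g' where "g' = (\<lambda>h::real. \<Sum>n. diffs c n * h ^ n)"
  have summable: "summable (\<lambda>n. c n * h ^ n)" if "norm h < r" for h
    using c[of "x + h"] that by (auto simp: sums_iff)
  have f_has_deriv: "DERIV f z :> g' (z - x)" if "z \<in> ball x (r/2)" for z
  proof -
    have "norm (z - x) < r/2"
      using that by (auto simp: dist_real_def abs_minus_commute)
    then have "DERIV (\<lambda>h. \<Sum>n. c n * h ^ n) (z - x) :> g' (z - x)"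
      unfolding g'_def by (intro termdiffs_strong[of _ "r/2"]) (use summable[of "r/2"] r in auto)
    then have "DERIV (\<lambda>z. \<Sum>n. c n * (z - x) ^ n) z :> g' (z - x)"
      using DERIV_shift[of _ "g' (z - x)" z "- x"] by simp
    then show ?thesis
      by (rule has_field_derivative_transform_within_open[where S="ball x r"])
         (use that r c in \<open>auto simp: dist_real_def sums_iff\<close>)
  qed
  have deriv_eq: "\<forall>\<^sub>F z in nhds x. deriv f z = g' (z - x)"
    using eventually_nhds_in_open[of "ball x (r/2)" x] r
    by (auto elim!: eventually_mono intro!: DERIV_imp_deriv f_has_deriv simp: dist_commute)
  have "summable (\<lambda>n. diffs c n * (r/4) ^ n)"
    by (rule termdiff_converges[of _ "r/2"]) (use r summable in auto)
  then have "isCont g' 0"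
    unfolding g'_def by (rule isCont_powser) (use r in auto)
  then have "isCont (\<lambda>z. g' (z - x)) x"
    using isCont_o2[where f="\<lambda>z. z - x" and a=x and g=g'] by simp
  then show "isCont (deriv f) x"
    using isCont_cong[OF deriv_eq] by simp
  show "(f has_real_derivative deriv f x) (at x)"
    using f_has_deriv[of x] deriv_eq r by (simp add: DERIV_imp_deriv)
qed

lemma periodic_add_int:
  fixes \<psi> :: "real \<Rightarrow> 'a"
  assumes "\<And>x. \<psi> (x + 1) = \<psi> x"
  shows "\<psi> (x + of_int m) = \<psi> x"
proof -
  have nat: "\<psi> (y + real n) = \<psi> y" for y n
    by (induction n arbitrary: y) (auto simp: assms add.assoc[symmetric])
  show ?thesis
  proof (cases "m \<ge> 0")
    case True
    then show ?thesis using nat[of x "nat m"] by simp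
  next
    case False
    then show ?thesis using nat[of "x + of_int m" "nat (- m)"] by simp
  qed
qed

lemma periodic_bounded:
  fixes \<psi> :: "real \<Rightarrow> real"
  assumes "\<And>x. \<psi> (x + 1) = \<psi> x" and "\<And>x. isCont \<psi> x"
  obtains M where "\<And>x. \<bar>\<psi> x\<bar> \<le> M"
proof -
  have "compact (\<psi> ` {0..1})"
    by (intro compact_continuous_image continuous_at_imp_continuous_on) (use assms in auto)
  then obtain M where M: "\<forall>y\<in>{0..1}. \<bar>\<psi> y\<bar> \<le> M"
    by (auto dest!: compact_imp_bounded simp: bounded_iff)
  show ?thesis
  proof (rule that)
    fix x
    have "\<psi> x = \<psi> (frac x)"
      using periodic_add_int[of \<psi> "frac x" "\<lfloor>x\<rfloor>"] assms(1) by (simp add: frac_def)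
    moreover have "frac x \<in> {0..1}"
      using frac_lt_1[of x] by simp
    ultimately show "\<bar>\<psi> x\<bar> \<le> M"
      using M by simp
  qed
qed

lemma periodic_deriv:
  fixes \<psi> :: "real \<Rightarrow> real"
  assumes "\<And>x. \<psi> (x + 1) = \<psi> x" and "\<And>x. (\<psi> has_real_derivative \<psi>' x) (at x)"
  shows "\<psi>' (x + 1) = \<psi>' x"
proof -
  have "((\<lambda>t. \<psi> (t + 1)) has_real_derivative \<psi>' (x + 1)) (at x)"
    using DERIV_shift[of \<psi> "\<psi>' (x + 1)" x 1] assms(2) by simp
  moreover have "(\<lambda>t. \<psi> (t + 1)) = \<psi>"
    using assms(1) by simp
  ultimately show ?thesis
    using DERIV_unique assms(2) by metis
qed

lemma LIMSEQ_floor_shift_div_power: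
  fixes B :: real
  assumes "B > 1"
  shows "(\<lambda>r. (z + of_int \<lfloor>x * B ^ r\<rfloor>) / B ^ r) \<longlonglongrightarrow> x"
proof -
  have err: "\<bar>(z + of_int \<lfloor>x * B ^ r\<rfloor>) / B ^ r - x\<bar> \<le> (\<bar>z\<bar> + 1) * (1 / B) ^ r" for r
  proof -
    have pos: "B ^ r > 0" using assms by simp
    have "(z + of_int \<lfloor>x * B ^ r\<rfloor>) / B ^ r - x = (z + of_int \<lfloor>x * B ^ r\<rfloor> - x * B ^ r) / B ^ r"
      using pos by (simp add: diff_divide_distrib del: power_eq_0_iff)
    moreover have "\<bar>z + of_int \<lfloor>x * B ^ r\<rfloor> - x * B ^ r\<bar> \<le> \<bar>z\<bar> + 1"
      by linarith
    ultimately show ?thesis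
      using pos by (simp add: divide_right_mono power_one_over)
  qed
  have "(\<lambda>r. (\<bar>z\<bar> + 1) * (1 / B) ^ r) \<longlonglongrightarrow> 0"
    using assms by (intro tendsto_mult_right_zero LIMSEQ_realpow_zero) auto
  then have "(\<lambda>r. (z + of_int \<lfloor>x * B ^ r\<rfloor>) / B ^ r - x) \<longlonglongrightarrow> 0"
    by (rule Lim_null_comparison[rotated]) (use err in auto)
  then show ?thesis
    by (rule LIM_zero_cancel)
qed

lemma bounded_shift_increment_zero:
  fixes f :: "real \<Rightarrow> real"
  assumes bound: "\<And>x. \<bar>f x\<bar> \<le> B" and shift: "\<And>x. f (x + 1) = f x + c"
  shows "c = 0"
proof (rule ccontr)
  assume "c \<noteq> 0"
  obtain n :: nat where n: "2 * B / \<bar>c\<bar> < real n"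
    using reals_Archimedean2 by blast
  have "f (real n) = f 0 + real n * c"
    by (induction n) (auto simp: shift[of "real _", unfolded add.commute[of _ 1]] algebra_simps)
  then have "real n * \<bar>c\<bar> \<le> 2 * B"
    using bound[of 0] bound[of "real n"] by (auto simp: abs_mult)
  with n \<open>c \<noteq> 0\<close> show False
    by (simp add: pos_divide_less_eq mult.commute)
qed

definition digit_value :: "nat \<Rightarrow> nat \<Rightarrow> (nat \<Rightarrow> nat) \<Rightarrow> nat" where
  "digit_value b n k = (\<Sum>i<n. k i * b ^ i)"

text \<open>Adding 1 to, resp. subtracting 1 from, the \<open>b\<close>-adic integer with digits \<open>k\<close>
  (least significant digit first).\<close>

definition odometer :: "nat \<Rightarrow> (nat \<Rightarrow> nat) \<Rightarrow> nat \<Rightarrow> nat" where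
  "odometer b k n = (if \<forall>i<n. k i = b - 1 then (k n + 1) mod b else k n)"

definition odometer_inv :: "nat \<Rightarrow> (nat \<Rightarrow> nat) \<Rightarrow> nat \<Rightarrow> nat" where
  "odometer_inv b k n = (if \<forall>i<n. k i = 0 then (k n + b - 1) mod b else k n)"

lemma odometer_in_seqs: "0 < b \<Longrightarrow> k \<in> seqs b \<Longrightarrow> odometer b k \<in> seqs b"
  by (auto simp: odometer_def seqs_def)

lemma odometer_inv_in_seqs: "0 < b \<Longrightarrow> k \<in> seqs b \<Longrightarrow> odometer_inv b k \<in> seqs b"
  by (auto simp: odometer_inv_def seqs_def)

lemma mod_add_pred: "j < b \<Longrightarrow> (j + b - Suc 0) mod (b::nat) = (if j = 0 then b - 1 else j - 1)"
  by (cases j) (auto simp: less_imp_diff_less)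

lemma odometer_inv_borrow:
  assumes "k \<in> seqs b"
  shows "(\<forall>i<n. odometer_inv b k i = b - 1) \<longleftrightarrow> (\<forall>i<n. k i = 0)"
proof (induction n)
  case (Suc n)
  have "k n < b" using assms by (simp add: seqs_def)
  then have "odometer_inv b k n = b - 1 \<longleftrightarrow> k n = 0" if "\<forall>i<n. k i = 0"
    using that by (auto simp: odometer_inv_def mod_add_pred)
  with Suc show ?case
    by (metis less_Suc_eq)
qed simp

lemma odometer_odometer_inv:
  assumes "k \<in> seqs b"
  shows "odometer b (odometer_inv b k) = k"
proof
  fix n
  have "k n < b" using assms by (simp add: seqs_def)
  then show "odometer b (odometer_inv b k) n = k n"
    using odometer_inv_borrow[OF assms, of n]
    by (cases "k n") (auto simp: odometer_def odometer_inv_def mod_add_pred)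
qed

lemma digit_value_odometer:
  assumes "k \<in> seqs b"
  shows "digit_value b n (odometer b k) + of_bool (\<forall>i<n. k i = b - 1) * b ^ n
           = digit_value b n k + 1"
proof (induction n)
  case (Suc n)
  define carry where "carry = (\<forall>i<n. k i = b - 1)"
  have "k n < b" using assms by (simp add: seqs_def)
  have value_Suc: "digit_value b (Suc n) k' = digit_value b n k' + k' n * b ^ n" for k'
    by (simp add: digit_value_def)
  have carry_Suc: "of_bool (\<forall>i<Suc n. k i = b - 1) = (of_bool carry * of_bool (k n = b - 1) :: nat)"
    by (auto simp: carry_def less_Suc_eq)
  have odometer_n: "odometer b k n = (if carry then (k n + 1) mod b else k n)"
    by (simp add: odometer_def carry_def)
  have IH: "digit_value b n (odometer b k) + of_bool carry * b ^ n = digit_value b n k + 1"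
    using Suc carry_def by simp
  consider "carry" "Suc (k n) = b" | "carry" "Suc (k n) < b" | "\<not> carry"
    using \<open>k n < b\<close> by linarith
  then show ?case
  proof cases
    case 1
    then have "odometer b k n = 0" "of_bool (k n = b - 1) = (1::nat)"
      by (auto simp: odometer_n)
    moreover have "b ^ Suc n = b ^ n + k n * b ^ n"
      by (simp add: 1(2)[symmetric])
    ultimately show ?thesis
      using 1 IH unfolding value_Suc carry_Suc by simp
  next
    case 2
    then have "odometer b k n = k n + 1" "of_bool (k n = b - 1) = (0::nat)"
      by (auto simp: odometer_n)
    then show ?thesis
      using 2 IH unfolding value_Suc carry_Suc by (simp add: algebra_simps)
  next
    case 3
    with IH show ?thesis
      unfolding value_Suc carry_Suc odometer_n by simp
  qed
qed (simp add: digit_value_def)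

lemma concat_word_Cons: "concat_word (a # w) i = concat_word [a] (concat_word w i)"
  by (auto simp: concat_word_def fun_eq_iff nth_Cons')

lemma concat_word_in_seqs: "\<forall>a\<in>set w. a < b \<Longrightarrow> i \<in> seqs b \<Longrightarrow> concat_word w i \<in> seqs b"
  by (auto simp: concat_word_def seqs_def)

lemma digit_value_Cons:
  "digit_value b (Suc n) (concat_word [a] k) = a + b * digit_value b n k"
  by (simp add: digit_value_def concat_word_def sum.lessThan_Suc_shift sum_distrib_left algebra_simps
      del: sum.lessThan_Suc)

lemma power_mult_bounded:
  fixes \<gamma> :: real
  assumes "0 \<le> \<gamma>" "\<gamma> < 1" and bound: "\<And>n. \<bar>a n\<bar> \<le> M"
  shows summable_power_mult_bounded: "summable (\<lambda>n. \<gamma> ^ n * a n)"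
    and abs_suminf_power_mult_bounded: "\<bar>\<Sum>n. \<gamma> ^ n * a n\<bar> \<le> M / (1 - \<gamma>)"
proof -
  have le: "\<bar>\<gamma> ^ n * a n\<bar> \<le> M * \<gamma> ^ n" for n
    using mult_left_mono[OF bound[of n], of "\<gamma> ^ n"] assms(1) by (simp add: abs_mult mult.commute)
  have geometric: "summable (\<lambda>n. M * \<gamma> ^ n)"
    using assms by (intro summable_mult summable_geometric) auto
  have abs_summable: "summable (\<lambda>n. \<bar>\<gamma> ^ n * a n\<bar>)"
    by (rule summable_comparison_test'[OF geometric]) (use le in auto)
  then show "summable (\<lambda>n. \<gamma> ^ n * a n)"
    by (rule summable_rabs_cancel)
  have "\<bar>\<Sum>n. \<gamma> ^ n * a n\<bar> \<le> (\<Sum>n. \<bar>\<gamma> ^ n * a n\<bar>)"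
    by (rule summable_rabs[OF abs_summable])
  also have "\<dots> \<le> (\<Sum>n. M * \<gamma> ^ n)"
    by (rule suminf_le[OF le abs_summable geometric])
  also have "\<dots> = M / (1 - \<gamma>)"
    using assms by (simp add: suminf_mult suminf_geometric)
  finally show "\<bar>\<Sum>n. \<gamma> ^ n * a n\<bar> \<le> M / (1 - \<gamma>)" .
qed

definition inverse_branch :: "nat \<Rightarrow> nat \<Rightarrow> (nat \<Rightarrow> nat) \<Rightarrow> real \<Rightarrow> real" where
  "inverse_branch b n k x = (x + real (digit_value b n k)) / real b ^ n"

lemma S_fun_eq_inverse_branch:
  "S_fun b \<gamma> \<phi> x k = (\<Sum>n. \<gamma> ^ n * \<phi> (inverse_branch b (Suc n) k x))"
  by (simp add: S_fun_def inverse_branch_def digit_value_def)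

lemma inverse_branch_Cons:
  assumes "0 < b"
  shows "inverse_branch b (Suc n) (concat_word [a] k) x = inverse_branch b n k ((x + real a) / real b)"
  using assms by (simp add: inverse_branch_def digit_value_Cons field_simps)

lemma periodic_inverse_branch_add_one:
  fixes \<psi> :: "real \<Rightarrow> 'a"
  assumes periodic: "\<And>x. \<psi> (x + 1) = \<psi> x" and "0 < b" and "k \<in> seqs b"
  shows "\<psi> (inverse_branch b n k (x + 1)) = \<psi> (inverse_branch b n (odometer b k) x)"
proof -
  define carry :: nat where "carry = of_bool (\<forall>i<n. k i = b - 1)"
  have "real (digit_value b n (odometer b k)) + real carry * real b ^ n = real (digit_value b n k) + 1"
    using arg_cong[OF digit_value_odometer[OF assms(3), of n], of real] unfolding carry_def
    by simp
  then have "inverse_branch b n k (x + 1) = inverse_branch b n (odometer b k) x + of_int (int carry)"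
    using \<open>0 < b\<close> by (simp add: inverse_branch_def field_simps)
  then show ?thesis
    using periodic_add_int[of \<psi>, OF periodic, of _ "int carry"] by simp
qed

lemma inverse_branch_has_derivative:
  "0 < b \<Longrightarrow> (inverse_branch b n k has_real_derivative 1 / real b ^ n) (at x)"
  unfolding inverse_branch_def by (auto intro!: derivative_eq_intros)

locale weierstrass_type =
  fixes b :: nat and \<gamma> :: real and \<phi> \<phi>' :: "real \<Rightarrow> real"
  assumes base_ge_2: "b \<ge> 2" and gamma_pos: "0 < \<gamma>" and gamma_less_1: "\<gamma> < 1"
    and periodic: "\<And>x. \<phi> (x + 1) = \<phi> x"
    and has_deriv: "\<And>x. (\<phi> has_real_derivative \<phi>' x) (at x)"
    and isCont_deriv: "\<And>x. isCont \<phi>' x"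
begin

definition dS :: "real \<Rightarrow> (nat \<Rightarrow> nat) \<Rightarrow> real" where
  "dS x k = (\<Sum>n. \<gamma> ^ n * (\<phi>' (inverse_branch b (Suc n) k x) / real b ^ Suc n))"

lemma base_pos: "0 < b"
  using base_ge_2 by simp

lemma periodic': "\<phi>' (x + 1) = \<phi>' x"
  by (rule periodic_deriv[OF periodic has_deriv])

lemma phi_bounded: obtains M where "\<And>x. \<bar>\<phi> x\<bar> \<le> M"
  using periodic_bounded[OF periodic DERIV_isCont[OF has_deriv]] by blast

lemma dS_terms_bounded: obtains M where "\<And>z m. \<bar>\<phi>' z / real b ^ m\<bar> \<le> M"
proof -
  obtain M where M: "\<And>z. \<bar>\<phi>' z\<bar> \<le> M"
    using periodic_bounded[OF periodic' isCont_deriv] by blast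
  have "\<bar>\<phi>' z / real b ^ m\<bar> \<le> M" for z m
  proof -
    have "1 \<le> real b ^ m"
      using base_ge_2 by (simp add: one_le_power)
    then have "\<bar>\<phi>' z / real b ^ m\<bar> \<le> \<bar>\<phi>' z\<bar>"
      by (simp add: abs_divide divide_le_eq mult_le_cancel_left1)
    with M[of z] show ?thesis
      by linarith
  qed
  then show ?thesis by (rule that)
qed

lemma summable_S_terms: "summable (\<lambda>n. \<gamma> ^ n * \<phi> (inverse_branch b (Suc n) k x))"
proof -
  obtain M where "\<And>x. \<bar>\<phi> x\<bar> \<le> M"
    using phi_bounded by blast
  then show ?thesis
    using gamma_pos gamma_less_1 by (intro summable_power_mult_bounded) auto
qed

lemma summable_dS_terms: "summable (\<lambda>n. \<gamma> ^ n * (\<phi>' (inverse_branch b (Suc n) k x) / real b ^ Suc n))"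
proof -
  obtain M where "\<And>z m. \<bar>\<phi>' z / real b ^ m\<bar> \<le> M"
    using dS_terms_bounded by blast
  then have "\<bar>\<phi>' (inverse_branch b (Suc n) k x) / real b ^ Suc n\<bar> \<le> M" for n .
  then show ?thesis
    using gamma_pos gamma_less_1 by (intro summable_power_mult_bounded) auto
qed

lemma S_fun_bounded: obtains B where "\<And>x k. \<bar>S_fun b \<gamma> \<phi> x k\<bar> \<le> B"
proof -
  obtain M where "\<And>x. \<bar>\<phi> x\<bar> \<le> M"
    using phi_bounded by blast
  then have "\<bar>S_fun b \<gamma> \<phi> x k\<bar> \<le> M / (1 - \<gamma>)" for x k
    unfolding S_fun_eq_inverse_branch
    using gamma_pos gamma_less_1 by (intro abs_suminf_power_mult_bounded) auto
  then show ?thesis by (rule that)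
qed

lemma uniform_limit_dS:
  "uniform_limit UNIV (\<lambda>N x. \<Sum>n<N. \<gamma> ^ n * (\<phi>' (inverse_branch b (Suc n) k x) / real b ^ Suc n))
     (\<lambda>x. dS x k) sequentially"
proof -
  obtain M where M: "\<And>z m. \<bar>\<phi>' z / real b ^ m\<bar> \<le> M"
    using dS_terms_bounded by blast
  have "\<bar>\<gamma> ^ n * (\<phi>' z / real b ^ Suc n)\<bar> \<le> M * \<gamma> ^ n" for n z
    using mult_left_mono[OF M[of z "Suc n"], of "\<gamma> ^ n"] gamma_pos
    by (simp add: abs_mult mult.commute)
  then show ?thesis
    unfolding dS_def using gamma_pos gamma_less_1
    by (intro Weierstrass_m_test[where M = "\<lambda>n. M * \<gamma> ^ n"] summable_mult summable_geometric) auto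
qed

lemma S_fun_has_derivative: "((\<lambda>x. S_fun b \<gamma> \<phi> x k) has_real_derivative dS x k) (at x)"
proof -
  have "((\<lambda>x. \<gamma> ^ n * \<phi> (inverse_branch b (Suc n) k x)) has_real_derivative
          \<gamma> ^ n * (\<phi>' (inverse_branch b (Suc n) k y) / real b ^ Suc n)) (at y within UNIV)" for n y
    using DERIV_cmult[OF DERIV_chain2[OF has_deriv inverse_branch_has_derivative[OF base_pos, of "Suc n" k y]],
        of "\<gamma> ^ n"]
    by simp
  from has_field_derivative_series[OF convex_UNIV this uniform_limit_dS, of 0] summable_S_terms
  obtain g where "\<And>x. (\<lambda>n. \<gamma> ^ n * \<phi> (inverse_branch b (Suc n) k x)) sums g x"
      and "(g has_real_derivative dS x k) (at x)"
    by auto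
  moreover from this(1) have "g = (\<lambda>x. S_fun b \<gamma> \<phi> x k)"
    by (auto simp: S_fun_eq_inverse_branch sums_iff)
  ultimately show ?thesis by simp
qed

lemma continuous_dS: "continuous_on UNIV (\<lambda>x. dS x k)"
proof (rule uniform_limit_theorem[OF _ uniform_limit_dS])
  have "isCont (\<lambda>x. \<phi>' (inverse_branch b (Suc n) k x)) x" for n x
    by (rule isCont_o2[OF DERIV_isCont[OF inverse_branch_has_derivative[OF base_pos]] isCont_deriv])
  then show "\<forall>\<^sub>F N in sequentially. continuous_on UNIV
      (\<lambda>x. \<Sum>n<N. \<gamma> ^ n * (\<phi>' (inverse_branch b (Suc n) k x) / real b ^ Suc n))"
    using base_pos
    by (auto intro!: always_eventually continuous_at_imp_continuous_on continuous_intros)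
qed simp

lemma S_deriv_eq_dS: "S_deriv b \<gamma> \<phi> x k = dS x k"
  unfolding S_deriv_def by (rule DERIV_imp_deriv[OF S_fun_has_derivative])

lemma dS_Cons:
  "dS x (concat_word [a] k) = \<phi>' ((x + a) / b) / b + \<gamma> / b * dS ((x + a) / b) k"
proof -
  define t where
    "t n = \<gamma> ^ n * (\<phi>' (inverse_branch b (Suc n) (concat_word [a] k) x) / real b ^ Suc n)" for n
  define u where
    "u n = \<gamma> ^ n * (\<phi>' (inverse_branch b (Suc n) k ((x + a) / b)) / real b ^ Suc n)" for n
  have t_0: "t 0 = \<phi>' ((x + a) / b) / b"
    by (simp add: t_def inverse_branch_def digit_value_def concat_word_def)
  have t_Suc: "t (Suc n) = \<gamma> / b * u n" for n
    using base_pos by (simp add: t_def u_def inverse_branch_Cons)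
  have "dS x (concat_word [a] k) = t 0 + (\<Sum>n. t (Suc n))"
    unfolding dS_def t_def[symmetric] using suminf_split_head[OF summable_dS_terms] t_def by simp
  also have "(\<Sum>n. t (Suc n)) = \<gamma> / b * suminf u"
    unfolding t_Suc u_def[abs_def] by (rule suminf_mult[OF summable_dS_terms])
  also have "suminf u = dS ((x + a) / b) k"
    by (simp add: u_def[abs_def] dS_def)
  finally show ?thesis
    unfolding t_0 .
qed


lemma dS_add_one: "k \<in> seqs b \<Longrightarrow> dS (x + 1) k = dS x (odometer b k)"
  unfolding dS_def using periodic_inverse_branch_add_one[of \<phi>', OF periodic' base_pos] by simp

lemma S_fun_add_one: "k \<in> seqs b \<Longrightarrow> S_fun b \<gamma> \<phi> (x + 1) k = S_fun b \<gamma> \<phi> x (odometer b k)"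
  unfolding S_fun_eq_inverse_branch using periodic_inverse_branch_add_one[of \<phi>, OF periodic base_pos] by simp

lemma dS_concat_word_diff:
  "\<exists>y c. c \<noteq> 0 \<and> (\<forall>i j. dS x (concat_word w i) - dS x (concat_word w j) = c * (dS y i - dS y j))"
proof (induction w arbitrary: x)
  case Nil
  show ?case
    by (rule exI[of _ x], rule exI[of _ 1]) (simp add: concat_word_def)
next
  case (Cons a w)
  obtain y c where "c \<noteq> 0" and diff: "\<And>i j. dS ((x + a) / b) (concat_word w i)
      - dS ((x + a) / b) (concat_word w j) = c * (dS y i - dS y j)"
    using Cons.IH by blast
  have "dS x (concat_word (a # w) i) - dS x (concat_word (a # w) j) = \<gamma> / b * c * (dS y i - dS y j)"
    for i j
    unfolding concat_word_Cons[of a w] dS_Cons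
    using arg_cong[OF diff[of i j], of "\<lambda>d. \<gamma> / b * d"] by (simp add: algebra_simps)
  moreover have "\<gamma> / b * c \<noteq> 0"
    using \<open>c \<noteq> 0\<close> gamma_pos base_pos by simp
  ultimately show ?case
    by blast
qed

definition dS_independent :: "real \<Rightarrow> bool" where
  "dS_independent x \<longleftrightarrow> (\<forall>k\<in>seqs b. \<forall>k'\<in>seqs b. dS x k = dS x k')"

lemma dS_independent_add_one_iff: "dS_independent (x + 1) \<longleftrightarrow> dS_independent x"
proof
  assume indep: "dS_independent (x + 1)"
  show "dS_independent x"
    unfolding dS_independent_def
  proof (intro ballI)
    fix k k' assume "k \<in> seqs b" "k' \<in> seqs b"
    then have inv: "odometer_inv b k \<in> seqs b" "odometer_inv b k' \<in> seqs b"
      using odometer_inv_in_seqs base_pos by blast+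
    have "dS x k = dS (x + 1) (odometer_inv b k)"
      using dS_add_one[OF inv(1)] odometer_odometer_inv[OF \<open>k \<in> seqs b\<close>] by simp
    also have "\<dots> = dS (x + 1) (odometer_inv b k')"
      using indep inv unfolding dS_independent_def by blast
    also have "\<dots> = dS x k'"
      using dS_add_one[OF inv(2)] odometer_odometer_inv[OF \<open>k' \<in> seqs b\<close>] by simp
    finally show "dS x k = dS x k'" .
  qed
next
  assume indep: "dS_independent x"
  show "dS_independent (x + 1)"
    unfolding dS_independent_def
  proof (intro ballI)
    fix k k' assume "k \<in> seqs b" "k' \<in> seqs b"
    then have "dS x (odometer b k) = dS x (odometer b k')"
      using indep odometer_in_seqs base_pos unfolding dS_independent_def by blast
    with \<open>k \<in> seqs b\<close> \<open>k' \<in> seqs b\<close> show "dS (x + 1) k = dS (x + 1) k'"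
      by (simp add: dS_add_one)
  qed
qed

lemma dS_independent_add_int: "dS_independent (x + of_int m) \<longleftrightarrow> dS_independent x"
  by (rule periodic_add_int) (rule dS_independent_add_one_iff)

lemma dS_independent_Cons_digit:
  assumes "a < b" and indep: "dS_independent x"
  shows "dS_independent ((x + a) / b)"
  unfolding dS_independent_def
proof (intro ballI)
  fix k k' assume "k \<in> seqs b" "k' \<in> seqs b"
  then have "concat_word [a] k \<in> seqs b" "concat_word [a] k' \<in> seqs b"
    using \<open>a < b\<close> by (simp_all add: concat_word_in_seqs)
  with indep have "dS x (concat_word [a] k) = dS x (concat_word [a] k')"
    unfolding dS_independent_def by blast
  then have "\<gamma> / b * dS ((x + a) / b) k = \<gamma> / b * dS ((x + a) / b) k'"
    unfolding dS_Cons by simp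
  then show "dS ((x + a) / b) k = dS ((x + a) / b) k'"
    using gamma_pos base_pos by simp
qed

lemma dS_independent_shift_div_power:
  assumes "dS_independent x"
  shows "dS_independent ((x + of_int m) / real b ^ r)"
proof (induction r)
  case 0
  then show ?case
    using assms dS_independent_add_int by simp
next
  case (Suc r)
  have "dS_independent (((x + of_int m) / real b ^ r + real 0) / b)"
    by (rule dS_independent_Cons_digit[OF base_pos Suc])
  moreover have "((x + of_int m) / real b ^ r + real 0) / b = (x + of_int m) / real b ^ Suc r"
    by (simp add: mult.commute)
  ultimately show ?case
    by metis
qed

lemma closed_dS_independent: "closed {x. dS_independent x}"
  unfolding dS_independent_def Ball_def
  by (intro closed_Collect_all closed_Collect_imp open_Collect_const closed_Collect_eq continuous_dS)

lemma dS_independent_everywhere: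
  assumes "dS_independent z"
  shows "dS_independent x"
proof -
  have "(\<lambda>r. (z + of_int \<lfloor>x * real b ^ r\<rfloor>) / real b ^ r) \<longlonglongrightarrow> x"
    using base_ge_2 by (intro LIMSEQ_floor_shift_div_power) simp
  then have "x \<in> {x. dS_independent x}"
    by (rule closed_sequentially[OF closed_dS_independent, rotated])
       (simp add: dS_independent_shift_div_power[OF assms])
  then show ?thesis
    by simp
qed

lemma not_dS_independent:
  assumes "condH b \<gamma> \<phi>"
  shows "\<not> dS_independent z"
proof
  assume "dS_independent z"
  define k0 :: "nat \<Rightarrow> nat" where "k0 = (\<lambda>_. 0)"
  define k1 where "k1 = odometer b k0"
  have "k0 \<in> seqs b" "k1 \<in> seqs b"
    using odometer_in_seqs base_pos by (auto simp: k0_def k1_def seqs_def)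
  have "k0 \<noteq> k1"
  proof -
    have "k1 0 = 1"
      using base_ge_2 by (simp add: k0_def k1_def odometer_def)
    then show ?thesis
      by (auto simp: k0_def)
  qed
  define F where "F x = S_fun b \<gamma> \<phi> x k1 - S_fun b \<gamma> \<phi> x k0" for x
  have "(F has_real_derivative 0) (at x)" for x
  proof -
    have "(F has_real_derivative dS x k1 - dS x k0) (at x)"
      unfolding F_def[abs_def] by (intro DERIV_diff S_fun_has_derivative)
    moreover have "dS x k1 = dS x k0"
      using dS_independent_everywhere[OF \<open>dS_independent z\<close>] \<open>k0 \<in> seqs b\<close> \<open>k1 \<in> seqs b\<close>
      unfolding dS_independent_def by blast
    ultimately show ?thesis by simp
  qed
  then have F_const: "F x = F 0" for x
    using DERIV_isconst_all by blast
  obtain B where "\<And>x k. \<bar>S_fun b \<gamma> \<phi> x k\<bar> \<le> B"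
    using S_fun_bounded by blast
  moreover have "S_fun b \<gamma> \<phi> (x + 1) k0 = S_fun b \<gamma> \<phi> x k0 + F 0" for x
    using S_fun_add_one[OF \<open>k0 \<in> seqs b\<close>] F_const[of x] by (simp add: F_def k1_def)
  ultimately have "F 0 = 0"
    by (rule bounded_shift_increment_zero)
  moreover obtain x where "F x \<noteq> 0"
    using assms \<open>k0 \<in> seqs b\<close> \<open>k1 \<in> seqs b\<close> \<open>k0 \<noteq> k1\<close> unfolding condH_def F_def by blast
  ultimately show False
    using F_const by simp
qed

lemma dS_concat_word_not_independent:
  assumes "condH b \<gamma> \<phi>"
  obtains i j where "i \<in> seqs b" "j \<in> seqs b" "dS x (concat_word w i) \<noteq> dS x (concat_word w j)"
proof -
  obtain y c where "c \<noteq> 0"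
    and diff: "\<And>i j. dS x (concat_word w i) - dS x (concat_word w j) = c * (dS y i - dS y j)"
    using dS_concat_word_diff by blast
  obtain i j where "i \<in> seqs b" "j \<in> seqs b" "dS y i \<noteq> dS y j"
    using not_dS_independent[OF assms] unfolding dS_independent_def by blast
  moreover have "dS x (concat_word w i) \<noteq> dS x (concat_word w j)"
  proof
    assume "dS x (concat_word w i) = dS x (concat_word w j)"
    then have "c * (dS y i - dS y j) = 0"
      using diff[of i j] by simp
    with \<open>c \<noteq> 0\<close> \<open>dS y i \<noteq> dS y j\<close> show False
      by simp
  qed
  with \<open>i \<in> seqs b\<close> \<open>j \<in> seqs b\<close> show ?thesis
    by (rule that)
qed

end

theorem lemma6p3:
  fixes b :: nat and \<gamma> \<alpha> :: real and \<phi> :: "real \<Rightarrow> real"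
  assumes "b \<ge> 2"
    and "0 < \<gamma>" and "\<gamma> < 1"
    and "real_analytic \<phi>"
    and "\<forall>x. \<phi> (x + 1) = \<phi> x"
    and "condH b \<gamma> \<phi>"
    and "AE x in lborel. exact_dimensional (m_x b \<gamma> \<phi> x) \<alpha>"
    and "\<alpha> < min 1 (ln (real b) / ln (1 / \<gamma>))"
    and "v \<in> words b" and "w \<in> words b"
  shows "\<exists>i\<in>seqs b. \<exists>j\<in>seqs b. i \<noteq> j \<and> (\<exists>x\<in>cyl_interval b v.
           S_deriv b \<gamma> \<phi> x (concat_word w i) - S_deriv b \<gamma> \<phi> x (concat_word w j) \<noteq> 0)"
proof -
  interpret weierstrass_type b \<gamma> \<phi> "deriv \<phi>"
    using assms real_analytic_imp_C1[OF assms(4)] by unfold_locales auto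
  define x where "x = (\<Sum>k<length v. real (v ! k) * real b ^ k) / real b ^ length v"
  have "x \<in> cyl_interval b v"
    unfolding cyl_interval_def x_def Let_def using assms(1) by (simp add: divide_strict_right_mono)
  moreover obtain i j where "i \<in> seqs b" "j \<in> seqs b" "dS x (concat_word w i) \<noteq> dS x (concat_word w j)"
    using dS_concat_word_not_independent[OF assms(6)] by blast
  moreover from this(3) have "i \<noteq> j"
    by blast
  ultimately show ?thesis
    unfolding S_deriv_eq_dS by auto
qed

end
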